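(* Fix the uniform prior $P$ on $\{1,\dots,n\}^T$, a utility function $u:\mathcal{Z}\times\mathcal{H}\to\mathbb{R}$, an amplitude $\lambda\ge0$ and a decay $\gamma\in(0,1)$. If Adaptive Sampling SGD is run for $T$ iterations, its posterior $Q$ satisfies $$D_{KL}(Q\|P)\le\sum_{t=2}^T\mathbb{E}_{(i_1,\dots,i_t)\sim Q}\frac{\lambda}{n}\sum_{i=1}^n\Bigg[\sum_{j=1}^{N_{i_t,t}}u(z_{i_t},h_{\tau_{i_t,j}})\gamma^{N_{i_t,t}-j}-\sum_{k=1}^{N_{i,t}}u(z_i,h_{\tau_{i,k}})\gamma^{N_{i,t}-k}\Bigg].$$
   Context: Adaptive Sampling SGD: inputs are examples $(z_1,\dots,z_n)\in\mathcal{Z}^n$, an initial hypothesis $h_0\in\mathcal{H}$, update rules $G_t:\mathcal{H}\times\mathcal{Z}\to\mathcal{H}$, utility $u$, amplitude $\lambda$, decay $\gamma$. Initialize weights $w_1=\dots=w_n=1$. For $t=1,\dots,T$: draw $i_t$ with conditional probability $Q_t(i)=Q(i_t=i\mid i_1,\dots,i_{t-1})=w_i/\sum_{j=1}^nw_j$; set $h_t=G_t(h_{t-1},z_{i_t})$; update $w_{i_t}\leftarrow w_{i_t}^{\gamma}\exp(\lambda u(z_{i_t},h_t))$. Output $h_T$. The posterior $Q$ is the resulting distribution of $(i_1,\dots,i_T)$ on $\{1,\dots,n\}^T$; $D_{KL}(Q\|P)=\mathbb{E}_{Q}\ln(Q/P)$. Notation: $N_{i,t}=|\{t'<t: i_{t'}=i\}|$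 is the number of times index $i$ was chosen before iteration $t$; $\tau_{i,j}$ is the $j$-th iteration at which $i$ was chosen. Sums with upper limit $0$ are $0$. *)

theory Defs
  imports "HOL-Analysis.Analysis"
begin

text \<open>Examples are z 1, ..., z n; an index sequence
(i_1,...,i_T) is a function s with s t = i_t for t in {1..T}
(extensional, i.e. an element of PiE {1..T} (\<lambda>_. {1..n})).\<close>

definition seqs :: "nat \<Rightarrow> nat \<Rightarrow> (nat \<Rightarrow> nat) set" where
  "seqs n T = PiE {1..T} (\<lambda>_. {1..n})"

fun hyp :: "'h \<Rightarrow> (nat \<Rightarrow> 'h \<Rightarrow> 'z \<Rightarrow> 'h) \<Rightarrow> (nat \<Rightarrow> 'z) \<Rightarrow> (nat \<Rightarrow> nat) \<Rightarrow> nat \<Rightarrow> 'h" where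
  "hyp h0 G z s 0 = h0"
| "hyp h0 G z s (Suc t) = G (Suc t) (hyp h0 G z s t) (z (s (Suc t)))"

fun weight :: "'h \<Rightarrow> (nat \<Rightarrow> 'h \<Rightarrow> 'z \<Rightarrow> 'h) \<Rightarrow> (nat \<Rightarrow> 'z) \<Rightarrow> ('z \<Rightarrow> 'h \<Rightarrow> real)
    \<Rightarrow> real \<Rightarrow> real \<Rightarrow> (nat \<Rightarrow> nat) \<Rightarrow> nat \<Rightarrow> nat \<Rightarrow> real" where
  "weight h0 G z u lam gam s 0 i = 1"
| "weight h0 G z u lam gam s (Suc t) i =
     (if i = s (Suc t)
      then (weight h0 G z u lam gam s t i) powr gam * exp (lam * u (z i) (hyp h0 G z s (Suc t)))
      else weight h0 G z u lam gam s t i)"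

definition condprob where
  "condprob n h0 G z u lam gam s t i =
     weight h0 G z u lam gam s (t - 1) i / (\<Sum>j=1..n. weight h0 G z u lam gam s (t - 1) j)"

definition posterior where
  "posterior n T h0 G z u lam gam s = (\<Prod>t=1..T. condprob n h0 G z u lam gam s t (s t))"

definition prior :: "nat \<Rightarrow> nat \<Rightarrow> (nat \<Rightarrow> nat) \<Rightarrow> real" where
  "prior n T s = 1 / real n ^ T"

definition KL where
  "KL n T h0 G z u lam gam =
     (\<Sum>s\<in>seqs n T. posterior n T h0 G z u lam gam s *
        ln (posterior n T h0 G z u lam gam s / prior n T s))"

definition Ncount :: "(nat \<Rightarrow> nat) \<Rightarrow> nat \<Rightarrow> nat \<Rightarrow> nat" where
  "Ncount s i t = card {t'. 1 \<le> t' \<and> t' < t \<and> s t' = i}"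

definition tau :: "nat \<Rightarrow> (nat \<Rightarrow> nat) \<Rightarrow> nat \<Rightarrow> nat \<Rightarrow> nat" where
  "tau T s i j = sorted_list_of_set {t'\<in>{1..T}. s t' = i} ! (j - 1)"

end

theory Submission
  imports Defs
begin

text \<open>The posterior is the product of the conditional probabilities \<open>Q\<^sub>t(i\<^sub>t)\<close> and the
prior is \<open>n\<^sup>-\<^sup>T\<close>, so \<open>ln (Q/P)\<close> is the sum over \<open>t\<close> of \<open>ln (n Q\<^sub>t(i\<^sub>t))\<close>.  Unrolling the
update \<open>w \<leftarrow> w\<^sup>\<gamma> exp (\<lambda> u)\<close> shows that before iteration \<open>t\<close> the log-weight \<open>ln w\<^sub>i\<close> is \<open>\<lambda>\<close>
times the \<open>\<gamma>\<close>-discounted sum of the utilities collected at the earlier visits of \<open>i\<close>.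
Since the logarithm of the mean weight dominates the mean of the log-weights,
\<open>ln (n Q\<^sub>t(i)) \<le> ln w\<^sub>i - (1/n) \<Sum>\<^sub>j ln w\<^sub>j\<close>, which is the bracket of the claim; the term
\<open>t = 1\<close> vanishes because all weights start at 1.  Taking the \<open>Q\<close>-expectation gives the
bound.\<close>

lemma card_less_nth_strict_sorted:
  fixes xs :: "'a::linorder list"
  assumes sorted: "sorted_wrt (<) xs" and p: "p < length xs"
  shows "card {x \<in> set xs. x < xs ! p} = p"
proof -
  have "{x \<in> set xs. x < xs ! p} = (!) xs ` {..<p}"
  proof (intro equalityI subsetI)
    fix x assume "x \<in> {x \<in> set xs. x < xs ! p}"
    then obtain i where i: "i < length xs" "x = xs ! i" "xs ! i < xs ! p"
      by (auto simp: in_set_conv_nth)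
    then have "i < p"
      using sorted p by (metis linorder_neqE_nat order.asym sorted_wrt_nth_less)
    then show "x \<in> (!) xs ` {..<p}" using i by auto
  qed (use sorted p in \<open>auto simp: sorted_wrt_nth_less\<close>)
  moreover have "inj_on ((!) xs) {..<p}"
    using sorted p by (auto simp: inj_on_def strict_sorted_iff nth_eq_iff_index_eq)
  ultimately show ?thesis by (simp add: card_image)
qed

lemma Ncount_Suc:
  assumes "1 \<le> t"
  shows "Ncount s i (Suc t) = Ncount s i t + (if s t = i then 1 else 0)"
proof -
  have "{t'. 1 \<le> t' \<and> t' < Suc t \<and> s t' = i} =
        {t'. 1 \<le> t' \<and> t' < t \<and> s t' = i} \<union> (if s t = i then {t} else {})"
    using assms by (auto simp: less_Suc_eq)
  moreover have "finite {t'. 1 \<le> t' \<and> t' < t \<and> s t' = i}"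
    by (rule finite_subset[of _ "{..<t}"]) auto
  ultimately show ?thesis
    unfolding Ncount_def by (simp add: card_insert_if)
qed

lemma tau_Ncount:
  assumes "1 \<le> t" "t \<le> T" "s t = i"
  shows "tau T s i (Suc (Ncount s i t)) = t"
proof -
  define xs where "xs = sorted_list_of_set {t' \<in> {1..T}. s t' = i}"
  have "t \<in> set xs" using assms by (simp add: xs_def)
  then obtain p where p: "p < length xs" "xs ! p = t" by (auto simp: in_set_conv_nth)
  have "{t'. 1 \<le> t' \<and> t' < t \<and> s t' = i} = {x \<in> set xs. x < xs ! p}"
    using assms p by (auto simp: xs_def)
  then have "Ncount s i t = p"
    using card_less_nth_strict_sorted[of xs p] p
    by (simp add: Ncount_def xs_def strict_sorted_list_of_set)
  then show ?thesis using p by (simp add: tau_def xs_def)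
qed

definition discounted_utility ::
    "nat \<Rightarrow> 'h \<Rightarrow> (nat \<Rightarrow> 'h \<Rightarrow> 'z \<Rightarrow> 'h) \<Rightarrow> (nat \<Rightarrow> 'z) \<Rightarrow> ('z \<Rightarrow> 'h \<Rightarrow> real)
      \<Rightarrow> real \<Rightarrow> (nat \<Rightarrow> nat) \<Rightarrow> nat \<Rightarrow> nat \<Rightarrow> real" where
  "discounted_utility T h0 G z u gam s t i =
     (\<Sum>k=1..Ncount s i t. u (z i) (hyp h0 G z s (tau T s i k)) * gam ^ (Ncount s i t - k))"

lemma discounted_utility_Suc_0 [simp]: "discounted_utility T h0 G z u gam s (Suc 0) i = 0"
  by (simp add: discounted_utility_def Ncount_def)

lemma discounted_utility_Suc:
  assumes "1 \<le> t" "t \<le> T"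
  shows "discounted_utility T h0 G z u gam s (Suc t) i =
    (if s t = i then gam * discounted_utility T h0 G z u gam s t i + u (z i) (hyp h0 G z s t)
     else discounted_utility T h0 G z u gam s t i)"
proof (cases "s t = i")
  case True
  define N where "N = Ncount s i t"
  define f where "f k = u (z i) (hyp h0 G z s (tau T s i k))" for k
  have "(\<Sum>k=1..N. f k * gam ^ (Suc N - k)) = gam * (\<Sum>k=1..N. f k * gam ^ (N - k))"
    unfolding sum_distrib_left by (rule sum.cong) (auto simp: Suc_diff_le)
  moreover have "f (Suc N) = u (z i) (hyp h0 G z s t)"
    using tau_Ncount[of t T s i] assms True by (simp add: f_def N_def)
  ultimately show ?thesis
    using True Ncount_Suc[OF assms(1), of s i]
    by (simp add: discounted_utility_def N_def[symmetric] f_def[symmetric])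
next
  case False
  then show ?thesis
    using Ncount_Suc[OF assms(1), of s i] by (simp add: discounted_utility_def)
qed

lemma weight_pos: "weight h0 G z u lam gam s t i > 0"
  by (induction t) auto

lemma ln_weight:
  "t < T \<Longrightarrow>
    ln (weight h0 G z u lam gam s t i) = lam * discounted_utility T h0 G z u gam s (Suc t) i"
proof (induction t)
  case (Suc t)
  then show ?case
    using weight_pos[of h0 G z u lam gam s t i]
      discounted_utility_Suc[of "Suc t" T h0 G z u gam s i]
    by (auto simp: ln_mult algebra_simps)
qed simp

lemma sum_ln_le_card_mul_ln_mean:
  fixes w :: "'a \<Rightarrow> real"
  assumes A: "finite A" "A \<noteq> {}" and pos: "\<And>i. i \<in> A \<Longrightarrow> w i > 0"
  shows "(\<Sum>i\<in>A. ln (w i)) \<le> card A * ln (sum w A / card A)"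
proof -
  define m where "m = sum w A / card A"
  have sum_pos: "sum w A > 0" using A pos by (intro sum_pos) auto
  then have m: "m > 0" using A by (simp add: m_def card_gt_0_iff)
  \<comment> \<open>ln x \<le> x - 1 at x = w i / m, summed over A\<close>
  have "(\<Sum>i\<in>A. ln (w i) - ln m) \<le> (\<Sum>i\<in>A. w i / m - 1)"
  proof (rule sum_mono)
    fix i assume "i \<in> A"
    then have "ln (w i) - ln m = ln (w i / m)" using pos[OF \<open>i \<in> A\<close>] m by (simp add: ln_div)
    also have "\<dots> \<le> w i / m - 1" using pos \<open>i \<in> A\<close> m by (intro ln_le_minus_one) simp
    finally show "ln (w i) - ln m \<le> w i / m - 1" .
  qed
  also have "\<dots> = sum w A / m - card A"
    by (simp add: sum_subtractf sum_divide_distrib)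
  also have "\<dots> = 0"
    using A sum_pos by (simp add: m_def card_gt_0_iff)
  finally show ?thesis by (simp add: sum_subtractf m_def)
qed

lemma ln_card_mul_ratio_le:
  fixes w :: "'a \<Rightarrow> real"
  assumes A: "finite A" "A \<noteq> {}" and pos: "\<And>i. i \<in> A \<Longrightarrow> w i > 0" and "w a > 0"
  shows "ln (card A * (w a / sum w A)) \<le> (\<Sum>i\<in>A. ln (w a) - ln (w i)) / card A"
proof -
  have n: "real (card A) > 0" using A by (simp add: card_gt_0_iff)
  have "sum w A > 0" using A pos by (intro sum_pos) auto
  then have "ln (card A * (w a / sum w A)) = ln (w a) - ln (sum w A / card A)"
    using n \<open>w a > 0\<close> by (simp add: ln_div ln_mult)
  also have "\<dots> \<le> ln (w a) - (\<Sum>i\<in>A. ln (w i)) / card A"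
    using sum_ln_le_card_mul_ln_mean[OF A pos] n by (simp add: divide_le_eq mult.commute)
  also have "\<dots> = (\<Sum>i\<in>A. ln (w a) - ln (w i)) / card A"
    using n by (simp add: sum_subtractf diff_divide_distrib)
  finally show ?thesis .
qed

lemma ln_card_mul_condprob_le:
  assumes "n \<ge> 1" "1 \<le> t" "t \<le> T"
  shows "ln (real n * condprob n h0 G z u lam gam s t (s t)) \<le>
    lam / real n * (\<Sum>i=1..n. discounted_utility T h0 G z u gam s t (s t)
                              - discounted_utility T h0 G z u gam s t i)"
proof -
  define w where "w = weight h0 G z u lam gam s (t - 1)"
  have ln_w: "ln (w i) = lam * discounted_utility T h0 G z u gam s t i" for i
    using ln_weight[of "t - 1" T h0 G z u lam gam s i] assms by (simp add: w_def)
  have "ln (real n * condprob n h0 G z u lam gam s t (s t))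
      = ln (card {1..n} * (w (s t) / sum w {1..n}))"
    by (simp add: condprob_def w_def)
  also have "\<dots> \<le> (\<Sum>i=1..n. ln (w (s t)) - ln (w i)) / card {1..n}"
    using assms by (intro ln_card_mul_ratio_le) (auto simp: w_def weight_pos)
  also have "\<dots> = lam / real n * (\<Sum>i=1..n. discounted_utility T h0 G z u gam s t (s t)
                                            - discounted_utility T h0 G z u gam s t i)"
    by (simp add: ln_w sum_distrib_left sum_divide_distrib right_diff_distrib[symmetric])
  finally show ?thesis .
qed

lemma condprob_pos:
  assumes "n \<ge> 1"
  shows "condprob n h0 G z u lam gam s t i > 0"
  using assms unfolding condprob_def by (intro divide_pos_pos sum_pos) (auto simp: weight_pos)

lemma ln_posterior_div_prior:
  assumes "n \<ge> 1"
  shows "ln (posterior n T h0 G z u lam gam s / prior n T s) =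
    (\<Sum>t=1..T. ln (real n * condprob n h0 G z u lam gam s t (s t)))"
proof -
  have "posterior n T h0 G z u lam gam s / prior n T s =
      (\<Prod>t=1..T. real n * condprob n h0 G z u lam gam s t (s t))"
    by (simp add: posterior_def prior_def prod.distrib)
  then show ?thesis
    using assms by (simp add: ln_prod condprob_pos[THEN order.strict_implies_not_eq, symmetric])
qed

lemma ln_posterior_div_prior_le:
  assumes "n \<ge> 1"
  shows "ln (posterior n T h0 G z u lam gam s / prior n T s) \<le>
    (\<Sum>t=2..T. lam / real n * (\<Sum>i=1..n. discounted_utility T h0 G z u gam s t (s t)
                                          - discounted_utility T h0 G z u gam s t i))"
    (is "_ \<le> (\<Sum>t=2..T. ?bound t)")
proof -
  have "ln (posterior n T h0 G z u lam gam s / prior n T s) \<le> (\<Sum>t=1..T. ?bound t)"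
    unfolding ln_posterior_div_prior[OF assms]
    using assms by (intro sum_mono ln_card_mul_condprob_le) auto
  also have "\<dots> = (\<Sum>t=2..T. ?bound t)"
    \<comment> \<open>nothing has been chosen before the first iteration\<close>
    by (cases T) (simp_all add: sum.atLeast_Suc_atMost numeral_2_eq_2)
  finally show ?thesis .
qed

theorem theorem4:
  fixes n T :: nat and z :: "nat \<Rightarrow> 'z" and h0 :: 'h
    and G :: "nat \<Rightarrow> 'h \<Rightarrow> 'z \<Rightarrow> 'h" and u :: "'z \<Rightarrow> 'h \<Rightarrow> real"
    and lam gam :: real
  assumes "n \<ge> 1" and "lam \<ge> 0" and "0 < gam" and "gam < 1"
  shows "KL n T h0 G z u lam gam \<le>
    (\<Sum>t=2..T. \<Sum>s\<in>seqs n T. posterior n T h0 G z u lam gam s *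
       (lam / real n * (\<Sum>i=1..n.
          (\<Sum>j=1..Ncount s (s t) t.
              u (z (s t)) (hyp h0 G z s (tau T s (s t) j)) * gam ^ (Ncount s (s t) t - j))
        - (\<Sum>k=1..Ncount s i t.
              u (z i) (hyp h0 G z s (tau T s i k)) * gam ^ (Ncount s i t - k)))))"
proof -
  define Q where "Q = posterior n T h0 G z u lam gam"
  define bound where "bound s t = lam / real n * (\<Sum>i=1..n.
      discounted_utility T h0 G z u gam s t (s t) - discounted_utility T h0 G z u gam s t i)"
    for s t
  have "Q s \<ge> 0" for s
    using assms(1) by (simp add: Q_def posterior_def prod_nonneg condprob_pos less_imp_le)
  then have "KL n T h0 G z u lam gam \<le> (\<Sum>s\<in>seqs n T. Q s * (\<Sum>t=2..T. bound s t))"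
    unfolding KL_def Q_def bound_def
    using assms(1) by (intro sum_mono mult_left_mono ln_posterior_div_prior_le)
  also have "\<dots> = (\<Sum>t=2..T. \<Sum>s\<in>seqs n T. Q s * bound s t)"
    unfolding sum_distrib_left by (rule sum.swap)
  finally show ?thesis
    by (simp add: Q_def bound_def discounted_utility_def)
qed

end
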